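(* There is an absolute constant $C$ such that the following holds for every integer $n\ge 2$: if $(x_1,\dots,x_n)\in A_n$ is a point at which $S_n$ attains its maximum over $A_n$ and $x_1=n$, then $S_n(x_1,\dots,x_n)\le n^3+Cn^2$.
   Context: For an integer $n\ge 2$, $A_n$ is the set of integer vectors $(x_1,\dots,x_n)\in\mathbb{Z}^n$ such that $n\ge x_1\ge x_2\ge\cdots\ge x_n\ge 0$, $\sum_{i=1}^k x_i\le 2n+6k-16$ for every $k\in\{1,\dots,n\}$, and $\sum_{i=1}^n x_i\le 6n-12$. For an integer $m\ge 2$, $S_m:\mathbb{R}^m\to\mathbb{R}$ is defined by $S_m(x_1,\dots,x_m)=\sum_{i=1}^{m-1}\sum_{j=i+1}^{m} x_i x_j^2$. *)

theory Defs
  imports Complex_Main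
begin

text \<open>Vectors (x_1,...,x_n) are represented as functions nat => int with
  indices 1..n; entries outside 1..n are fixed to 0 so that A n is a set of
  canonical representatives of Z^n.\<close>

definition A :: "nat \<Rightarrow> (nat \<Rightarrow> int) set" where
  "A n = {x. (\<forall>i. i \<notin> {1..n} \<longrightarrow> x i = 0)
           \<and> int n \<ge> x 1
           \<and> (\<forall>i\<in>{1..<n}. x i \<ge> x (Suc i))
           \<and> x n \<ge> 0
           \<and> (\<forall>k\<in>{1..n}. (\<Sum>i=1..k. x i) \<le> 2 * int n + 6 * int k - 16)
           \<and> (\<Sum>i=1..n. x i) \<le> 6 * int n - 12}"

definition S :: "nat \<Rightarrow> (nat \<Rightarrow> real) \<Rightarrow> real" where
  "S m x = (\<Sum>i=1..m-1. \<Sum>j=i+1..m. x i * (x j)^2)"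

end

theory Submission imports Defs begin

text \<open>Write a = x_2 and b = n - a. Grouping S by the larger index gives
  S = n a^2 + sum_{j>=3} x_j^2 (x_1 + ... + x_{j-1}), and the prefix constraints bound
  the inner sums by 2n + 6j. The partial sums of x_i - 6 over 3 <= i <= k are at most b,
  so Abel summation against the decreasing weights x_j gives sum_{j>=3} x_j^2 <= ab + O(n);
  moreover (j - 2) x_j <= x_3 + ... + x_j = O(n), so sum_j j x_j^2 = O(n^2). Altogether
  S <= n (a^2 + 2ab) + O(n^2) <= n (a + b)^2 + O(n^2) = n^3 + O(n^2).
  The bound holds for every such x.\<close>

lemma sum_upper_triangle_swap:
  fixes f :: "nat \<Rightarrow> nat \<Rightarrow> 'a::comm_monoid_add"
  shows "(\<Sum>i=1..m-1. \<Sum>j=i+1..m. f i j) = (\<Sum>j=1..m. \<Sum>i=1..j-1. f i j)"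
proof (induction m)
  case 0
  then show ?case by simp
next
  case (Suc m)
  have extend: "(\<Sum>i=1..m. \<Sum>j=i+1..Suc m. f i j) = (\<Sum>i=1..m. (\<Sum>j=i+1..m. f i j) + f i (Suc m))"
    by (rule sum.cong) auto
  have drop_last: "(\<Sum>i=1..m. \<Sum>j=i+1..m. f i j) = (\<Sum>i=1..m-1. \<Sum>j=i+1..m. f i j)"
    by (cases m) (simp_all add: sum.atLeast_Suc_atMost_Suc_shift)
  show ?case using Suc.IH extend drop_last by (simp add: sum.distrib)
qed

lemma S_eq_sum_square_times_prefix:
  "S m x = (\<Sum>j=1..m. (x j)^2 * (\<Sum>i=1..j-1. x i))"
  unfolding S_def sum_upper_triangle_swap by (simp add: sum_distrib_left mult.commute)

lemma abel_partial_summation_le: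
  fixes w g :: "nat \<Rightarrow> real"
  assumes "m \<le> N"
    and dec: "\<And>k. m \<le> k \<Longrightarrow> w (Suc k) \<le> w k"
    and bnd: "\<And>k. m \<le> k \<Longrightarrow> k \<le> N \<Longrightarrow> (\<Sum>i=m..k. g i) \<le> B"
  shows "(\<Sum>j=m..N. w j * g j) \<le> B * (w m - w (Suc N)) + w (Suc N) * (\<Sum>i=m..N. g i)"
  using assms(1) bnd
proof (induction N rule: dec_induct)
  case base
  have "0 \<le> (w m - w (Suc m)) * (B - g m)" using base dec[of m] by simp
  then show ?case by (simp add: algebra_simps)
next
  case (step n)
  have IH: "(\<Sum>j=m..n. w j * g j) \<le> B * (w m - w (Suc n)) + w (Suc n) * (\<Sum>i=m..n. g i)"
    using step by auto
  have "(\<Sum>i=m..Suc n. g i) \<le> B" using step.prems[of "Suc n"] step.hyps(1) by simp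
  moreover have "w (Suc (Suc n)) \<le> w (Suc n)" using dec step by auto
  ultimately have "0 \<le> (w (Suc n) - w (Suc (Suc n))) * (B - (\<Sum>i=m..Suc n. g i))"
    by simp
  then show ?case using IH step.hyps by (simp add: algebra_simps)
qed

lemma abel_inequality:
  fixes w g :: "nat \<Rightarrow> real"
  assumes dec: "\<And>k. m \<le> k \<Longrightarrow> w (Suc k) \<le> w k"
    and nonneg: "\<And>k. w k \<ge> 0"
    and bnd: "\<And>k. m \<le> k \<Longrightarrow> k \<le> N \<Longrightarrow> (\<Sum>i=m..k. g i) \<le> B"
    and "B \<ge> 0"
  shows "(\<Sum>j=m..N. w j * g j) \<le> B * w m"
proof (cases "m \<le> N")
  case True
  have "(\<Sum>j=m..N. w j * g j) \<le> B * (w m - w (Suc N)) + w (Suc N) * (\<Sum>i=m..N. g i)"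
    using abel_partial_summation_le[of m N w g B] True dec bnd by blast
  also have "\<dots> \<le> B * (w m - w (Suc N)) + w (Suc N) * B"
    using bnd[of N] True nonneg[of "Suc N"] by (simp add: mult_left_mono)
  finally show ?thesis by (simp add: algebra_simps)
next
  case False
  then show ?thesis using \<open>B \<ge> 0\<close> nonneg[of m] by simp
qed

locale admissible_profile =
  fixes n :: nat and y :: "nat \<Rightarrow> real"
  assumes n_ge_2: "n \<ge> 2"
    and support: "\<And>i. i \<notin> {1..n} \<Longrightarrow> y i = 0"
    and first: "y 1 = real n"
    and step_antitone: "\<And>i. i \<in> {1..<n} \<Longrightarrow> y (Suc i) \<le> y i"
    and last_nonneg: "y n \<ge> 0"
    and prefix_le: "\<And>k. k \<in> {1..n} \<Longrightarrow> (\<Sum>i=1..k. y i) \<le> 2 * real n + 6 * real k - 16"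
    and total_le: "(\<Sum>i=1..n. y i) \<le> 6 * real n - 12"
begin

lemma Suc_le:
  assumes "k \<ge> 1"
  shows "y (Suc k) \<le> y k"
proof (cases "k < n")
  case True
  then show ?thesis using step_antitone assms by auto
next
  case False
  then have "y (Suc k) = 0" using support by auto
  moreover have "k = n \<or> y k = 0" using False support[of k] by auto
  ultimately show ?thesis using last_nonneg by auto
qed

lemma antitone:
  assumes "1 \<le> i" "i \<le> j"
  shows "y j \<le> y i"
  using assms(2)
proof (induction j rule: dec_induct)
  case base
  then show ?case by simp
next
  case (step j)
  then show ?case using Suc_le[of j] assms(1) by linarith
qed

lemma nonneg: "y k \<ge> 0"
  using antitone[of k n] last_nonneg support[of k] by (cases "k \<in> {1..n}") auto

lemma second_le: "y 2 \<le> real n"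
  using Suc_le[of 1] first by (simp add: numeral_2_eq_2)

lemma prefix_split: "k \<ge> 2 \<Longrightarrow> (\<Sum>i=1..k. y i) = real n + y 2 + (\<Sum>i=3..k. y i)"
  using sum.atLeast_Suc_atMost[of 1 k y] sum.atLeast_Suc_atMost[of 2 k y] first
  by (simp add: numeral_2_eq_2 numeral_3_eq_3)

lemma tail_sum_le: "(\<Sum>i=3..n. y i) \<le> 6 * real n"
  using total_le prefix_split[OF n_ge_2] nonneg[of 2] by linarith

lemma tail_prefix_le:
  "3 \<le> k \<Longrightarrow> k \<le> n \<Longrightarrow> (\<Sum>i=3..k. y i) \<le> (real n - y 2) + 6 * real k - 16"
  using prefix_le[of k] prefix_split[of k] by auto

lemma tail_excess_prefix_le:
  assumes "3 \<le> k" "k \<le> n"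
  shows "(\<Sum>i=3..k. y i - 6) \<le> real n - y 2"
proof -
  have "(\<Sum>i=3..k. y i - 6) = (\<Sum>i=3..k. y i) - 6 * (real k - 2)"
    using assms by (simp add: sum_subtractf of_nat_diff)
  then show ?thesis using tail_prefix_le[OF assms] by (simp add: algebra_simps)
qed

lemma tail_square_sum_le: "(\<Sum>j=3..n. (y j)^2) \<le> y 2 * (real n - y 2) + 36 * real n"
proof -
  have "(\<Sum>j=3..n. y j * (y j - 6)) \<le> (real n - y 2) * y 3"
    by (rule abel_inequality) (use Suc_le nonneg tail_excess_prefix_le second_le in auto)
  also have "\<dots> \<le> (real n - y 2) * y 2"
    using Suc_le[of 2] second_le by (intro mult_left_mono) (simp_all add: numeral_3_eq_3)
  finally have "(\<Sum>j=3..n. y j * (y j - 6)) \<le> y 2 * (real n - y 2)" by (simp add: mult.commute)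
  moreover have "(\<Sum>j=3..n. (y j)^2) = (\<Sum>j=3..n. y j * (y j - 6)) + 6 * (\<Sum>j=3..n. y j)"
    by (simp add: power2_eq_square algebra_simps sum.distrib sum_distrib_left sum_subtractf)
  ultimately show ?thesis using tail_sum_le by linarith
qed

text \<open>Since the entries decrease, (j - 2) y j is at most the tail prefix sum up to j.\<close>

lemma index_times_entry_le:
  assumes "3 \<le> j" "j \<le> n"
  shows "real j * y j \<le> 9 * real n"
proof -
  have "(\<Sum>i=3..j. y j) \<le> (\<Sum>i=3..j. y i)" by (rule sum_mono) (use antitone in auto)
  moreover have "(\<Sum>i=3..j. y j) = (real j - 2) * y j" using assms by auto
  moreover have "y j \<le> y 2" using antitone[of 2 j] assms by auto
  ultimately show ?thesis
    using tail_prefix_le[OF assms] second_le nonneg[of 2] assms by (simp add: algebra_simps)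
qed

lemma tail_index_square_sum_le: "(\<Sum>j=3..n. real j * (y j)^2) \<le> 54 * (real n)^2"
proof -
  have "(\<Sum>j=3..n. real j * (y j)^2) \<le> (\<Sum>j=3..n. 9 * real n * y j)"
  proof (rule sum_mono)
    fix j assume "j \<in> {3..n}"
    then have "(real j * y j) * y j \<le> (9 * real n) * y j"
      using index_times_entry_le[of j] nonneg[of j] by (simp add: mult_right_mono)
    then show "real j * (y j)^2 \<le> 9 * real n * y j" by (simp add: power2_eq_square)
  qed
  also have "\<dots> = 9 * real n * (\<Sum>j=3..n. y j)" by (simp add: sum_distrib_left)
  also have "\<dots> \<le> 9 * real n * (6 * real n)" using mult_left_mono[OF tail_sum_le, of "9 * real n"] by simp
  finally show ?thesis by (simp add: power2_eq_square)
qed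

lemma S_le_tail_bounds:
  "S n y \<le> real n * (y 2)^2 + 2 * real n * (\<Sum>j=3..n. (y j)^2) + 6 * (\<Sum>j=3..n. real j * (y j)^2)"
proof -
  have "S n y = real n * (y 2)^2 + (\<Sum>j=3..n. (y j)^2 * (\<Sum>i=1..j-1. y i))"
    using n_ge_2 first unfolding S_eq_sum_square_times_prefix
    by (simp add: sum.atLeast_Suc_atMost numeral_3_eq_3 numeral_2_eq_2)
  also have "(\<Sum>j=3..n. (y j)^2 * (\<Sum>i=1..j-1. y i)) \<le> (\<Sum>j=3..n. (y j)^2 * (2 * real n + 6 * real j))"
  proof (rule sum_mono)
    fix j assume "j \<in> {3..n}"
    then have "j - 1 \<in> {1..n}" by auto
    then have "(\<Sum>i=1..j-1. y i) \<le> 2 * real n + 6 * real j"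
      using prefix_le[of "j - 1"] by (simp add: of_nat_diff)
    then show "(y j)^2 * (\<Sum>i=1..j-1. y i) \<le> (y j)^2 * (2 * real n + 6 * real j)"
      by (simp add: mult_left_mono)
  qed
  finally show ?thesis by (simp add: algebra_simps sum.distrib sum_distrib_left)
qed

lemma S_le: "S n y \<le> (real n)^3 + 396 * (real n)^2"
proof -
  let ?a = "y 2" and ?b = "real n - y 2"
  have "S n y \<le> real n * ?a^2 + 2 * real n * (?a * ?b + 36 * real n) + 6 * (54 * (real n)^2)"
    using S_le_tail_bounds tail_square_sum_le tail_index_square_sum_le
      mult_left_mono[OF tail_square_sum_le, of "2 * real n"] by simp
  moreover have "real n * ?a^2 + 2 * real n * (?a * ?b) + real n * ?b^2 = (real n)^3"
    by (simp add: power2_eq_square power3_eq_cube algebra_simps)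
  moreover have "real n * ?b^2 \<ge> 0" by simp
  ultimately show ?thesis by (simp add: power2_eq_square algebra_simps)
qed

end

lemma admissible_profile_of_A:
  assumes "x \<in> A n" "x 1 = int n" "n \<ge> 2"
  shows "admissible_profile n (\<lambda>i. real_of_int (x i))"
proof unfold_locales
  fix k assume "k \<in> {1..n}"
  then have "(\<Sum>i=1..k. x i) \<le> 2 * int n + 6 * int k - 16" using assms(1) unfolding A_def by auto
  then have "real_of_int (\<Sum>i=1..k. x i) \<le> real_of_int (2 * int n + 6 * int k - 16)"
    by (simp only: of_int_le_iff)
  then show "(\<Sum>i=1..k. real_of_int (x i)) \<le> 2 * real n + 6 * real k - 16" by simp
next
  have "(\<Sum>i=1..n. x i) \<le> 6 * int n - 12" using assms(1) unfolding A_def by auto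
  then have "real_of_int (\<Sum>i=1..n. x i) \<le> real_of_int (6 * int n - 12)"
    by (simp only: of_int_le_iff)
  then show "(\<Sum>i=1..n. real_of_int (x i)) \<le> 6 * real n - 12" by simp
qed (use assms in \<open>auto simp: A_def\<close>)

theorem lemma7:
  shows "\<exists>C::real. \<forall>n::nat. n \<ge> 2 \<longrightarrow>
     (\<forall>x. x \<in> A n \<and> (\<forall>y\<in>A n. S n (\<lambda>i. real_of_int (y i)) \<le> S n (\<lambda>i. real_of_int (x i)))
          \<and> x 1 = int n
        \<longrightarrow> S n (\<lambda>i. real_of_int (x i)) \<le> (real n)^3 + C * (real n)^2)"
proof (intro exI[of _ 396] allI impI, elim conjE)
  fix n :: nat and x :: "nat \<Rightarrow> int"
  assume "n \<ge> 2" "x \<in> A n" "x 1 = int n"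
  then show "S n (\<lambda>i. real_of_int (x i)) \<le> (real n)^3 + 396 * (real n)^2"
    by (intro admissible_profile.S_le admissible_profile_of_A)
qed

end
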